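(* Let $n\ge0$ and let $f^{n+1}_1,\ldots,f^{n+1}_{n+1}$ be Alpert multiwavelets of multiplicity $n+1$. Let $c$ be the real constant with $f^{n+1}_{n+1}(x)=c\,p_n(x)$ for $x\in(0,1)$. Then for all real $t$, \[ \int_{-1}^1 f^{n+1}_{n+1}(x)e^{ixt}\,dx=2ic\,t^{2n+1}\frac{(-1)^n n!}{(3n+2)!}\,{}_1F_2\!\left(\begin{matrix}n+1\\ \frac{3n+3}2,\,\frac{3n+4}2\end{matrix};-\frac{t^2}4\right). \] If $n\ge1$ and $d$ is the real constant with $f^{n+1}_{n}(x)=d\,q_n(x)$ for $x\in(0,1)$, then for all real $t$, \[ \int_{-1}^1 f^{n+1}_{n}(x)e^{ixt}\,dx=2d\,t^{2n}\frac{(-1)^n n!}{(3n+1)!}\,{}_1F_2\!\left(\begin{matrix}n+1\\ \frac{3n+2}2,\,\frac{3n+3}2\end{matrix};-\frac{t^2}4\right). \]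
   Context: Alpert multiwavelets of multiplicity $N\in\mathbb{N}$: real functions $f^N_1,\ldots,f^N_N$ supported on $[-1,1]$ such that (i) the restriction of each $f^N_i$ to $(0,1)$ is a polynomial of degree at most $N-1$; (ii) $f^N_k(-t)=(-1)^{k+N-1}f^N_k(t)$ for $t\in(0,1)$; (iii) $\int_{-1}^1 f^N_i f^N_j\,dt=\delta_{i,j}$; (iv) $\int_{-1}^1 f^N_k(t)t^i\,dt=0$ for $i=0,\ldots,k+N-2$. (On $(0,1)$, $f^{n+1}_{n+1}$ is a constant multiple of $p_n$ and, for $n\ge1$, $f^{n+1}_n$ is a constant multiple of $q_n$.) Pochhammer symbol: $(a)_0=1$, $(a)_n=a(a+1)\cdots(a+n-1)$; $\binom{n+a}{n}:=\frac{(a+1)_n}{n!}$. $p_n(x)=\sum_{k=0}^n\binom nk\binom{n+\frac k2}{n}(-1)^{n-k}x^k$, $q_n(x)=\sum_{k=0}^n\binom nk\binom{n+\frac{k-1}2}{n}(-1)^{n-k}x^k$. ${}_1F_2(a;b_1,b_2;z)=\sum_{j\ge0}\frac{(a)_j}{(b_1)_j(b_2)_j\,j!}z^j$. *)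

theory Defs
  imports "HOL-Analysis.Analysis" "HOL-Computational_Algebra.Polynomial"
begin

text \<open>Generalized binomial coefficient binom(n+a, n) := (a+1)_n / n!.\<close>
definition gbinom :: "nat \<Rightarrow> real \<Rightarrow> real" where
  "gbinom n a = pochhammer (a + 1) n / fact n"

definition alpert_p :: "nat \<Rightarrow> real \<Rightarrow> real" where
  "alpert_p n x = (\<Sum>k=0..n. real (n choose k) * gbinom n (real k / 2) * (-1) ^ (n - k) * x ^ k)"

definition alpert_q :: "nat \<Rightarrow> real \<Rightarrow> real" where
  "alpert_q n x = (\<Sum>k=0..n. real (n choose k) * gbinom n ((real k - 1) / 2) * (-1) ^ (n - k) * x ^ k)"

definition hyp1F2 :: "real \<Rightarrow> real \<Rightarrow> real \<Rightarrow> real \<Rightarrow> real" where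
  "hyp1F2 a b1 b2 z = (\<Sum>j. pochhammer a j / (pochhammer b1 j * pochhammer b2 j * fact j) * z ^ j)"

definition alpert_multiwavelets :: "nat \<Rightarrow> (nat \<Rightarrow> real \<Rightarrow> real) \<Rightarrow> bool" where
  "alpert_multiwavelets N f \<longleftrightarrow>
     (\<forall>k\<in>{1..N}. \<forall>t. t \<notin> {-1..1} \<longrightarrow> f k t = 0) \<and>
     (\<forall>k\<in>{1..N}. \<exists>P :: real poly. degree P \<le> N - 1 \<and> (\<forall>t\<in>{0<..<1}. f k t = poly P t)) \<and>
     (\<forall>k\<in>{1..N}. \<forall>t\<in>{0<..<1}. f k (-t) = (-1) ^ (k + N - 1) * f k t) \<and>
     (\<forall>i\<in>{1..N}. \<forall>j\<in>{1..N}. integral {-1..1} (\<lambda>t. f i t * f j t) = (if i = j then 1 else 0)) \<and>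
     (\<forall>k\<in>{1..N}. \<forall>i\<in>{0..k + N - 2}. integral {-1..1} (\<lambda>t. f k t * t ^ i) = 0)"

end

theory Submission
  imports Defs
begin

text \<open>
  On \<open>(0,1)\<close> the two wavelets are \<open>c p\<^sub>n\<close> and \<open>d q\<^sub>n\<close>, and their parities reduce the Fourier
  integral over \<open>[-1,1]\<close> to \<open>2ic \<integral>\<^sub>0\<^sup>1 p\<^sub>n(x) sin(xt) dx\<close> resp. \<open>2d \<integral>\<^sub>0\<^sup>1 q\<^sub>n(x) cos(xt) dx\<close>.
  Both polynomials have the form \<open>\<Sum>\<^sub>k (n choose k) Q(k) (-1)\<^sup>n\<^sup>-\<^sup>k x\<^sup>k\<close> with \<open>Q(k) = binom(n + k/2 + s, n)\<close>
  a polynomial of degree \<open>n\<close> in \<open>k\<close>, so the moment \<open>\<integral>\<^sub>0\<^sup>1 x\<^sup>m\<close> is an \<open>n\<close>-th finite difference of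
  \<open>k \<mapsto> Q(k)/(k+m+1)\<close>, namely \<open>(-1)\<^sup>n Q(-m-1) n!/(m+1)\<^sub>n\<^sub>+\<^sub>1\<close>. For the moments occurring in the
  sine resp. cosine series, \<open>Q(-m-1)\<close> is a multiple of \<open>(-j)\<^sub>n\<close>; the first \<open>n\<close> terms vanish, and
  integrating the series termwise and shifting the index by \<open>n\<close> leaves exactly the \<open>\<^sub>1F\<^sub>2\<close> series.
\<close>

section \<open>Alternating binomial sums\<close>

lemma alternating_binomial_sum_Suc:
  fixes g :: "nat \<Rightarrow> real"
  shows "(\<Sum>k\<le>Suc n. real (Suc n choose k) * (-1)^k * g k) =
    (\<Sum>k\<le>n. real (n choose k) * (-1)^k * g k) - (\<Sum>k\<le>n. real (n choose k) * (-1)^k * g (Suc k))"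
proof -
  have "(\<Sum>k\<le>Suc n. real (Suc n choose k) * (-1)^k * g k) =
      g 0 + (\<Sum>k\<le>n. real (Suc n choose Suc k) * (-1)^(Suc k) * g (Suc k))"
    by (subst sum.atMost_Suc_shift) simp
  also have "\<dots> = g 0 + (\<Sum>k\<le>n. real (n choose Suc k) * (-1)^(Suc k) * g (Suc k))
        - (\<Sum>k\<le>n. real (n choose k) * (-1)^k * g (Suc k))"
  proof -
    have "real (Suc n choose Suc k) * (-1)^(Suc k) * g (Suc k) =
        real (n choose Suc k) * (-1)^(Suc k) * g (Suc k) - real (n choose k) * (-1)^k * g (Suc k)" for k
      by (simp add: algebra_simps)
    then show ?thesis by (simp add: sum_subtractf)
  qed
  also have "g 0 + (\<Sum>k\<le>n. real (n choose Suc k) * (-1)^(Suc k) * g (Suc k))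
      = (\<Sum>k\<le>Suc n. real (n choose k) * (-1)^k * g k)"
    by (simp only: sum.atMost_Suc_shift) simp
  also have "\<dots> = (\<Sum>k\<le>n. real (n choose k) * (-1)^k * g k)"
    by simp
  finally show ?thesis .
qed

lemma alternating_binomial_sum_power:
  "i < n \<Longrightarrow> (\<Sum>k\<le>n. real (n choose k) * (-1)^k * real k ^ i) = 0"
proof (induction n arbitrary: i)
  case 0
  then show ?case by simp
next
  case (Suc n)
  define X where "X k l = real (n choose k) * (-1)^k * real k ^ l" for k l
  have "(real k + 1) ^ i = real k ^ i + (\<Sum>l<i. real (i choose l) * real k ^ l)" for k
    by (simp add: binomial_ring lessThan_Suc_atMost[symmetric])
  then have shifted: "real (n choose k) * (-1)^k * real (Suc k) ^ i = X k i + (\<Sum>l<i. real (i choose l) * X k l)" for k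
    unfolding X_def by (simp add: sum_distrib_left algebra_simps)
  have "(\<Sum>k\<le>n. \<Sum>l<i. real (i choose l) * X k l) = (\<Sum>l<i. real (i choose l) * (\<Sum>k\<le>n. X k l))"
    by (subst sum.swap) (simp only: sum_distrib_left)
  also have "\<dots> = 0"
    using Suc by (intro sum.neutral) (simp add: X_def)
  finally have "(\<Sum>k\<le>n. real (n choose k) * (-1)^k * real (Suc k) ^ i) = (\<Sum>k\<le>n. X k i)"
    by (simp only: shifted sum.distrib)
  then show ?case
    using alternating_binomial_sum_Suc[of n "\<lambda>k. real k ^ i"] by (simp add: X_def)
qed

lemma alternating_binomial_sum_poly:
  fixes H :: "real poly"
  assumes "degree H < n"
  shows "(\<Sum>k\<le>n. real (n choose k) * (-1)^k * poly H (real k)) = 0"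
proof -
  have "(\<Sum>k\<le>n. real (n choose k) * (-1)^k * poly H (real k))
     = (\<Sum>i\<le>degree H. coeff H i * (\<Sum>k\<le>n. real (n choose k) * (-1)^k * real k ^ i))"
    unfolding poly_altdef sum_distrib_left
    by (subst sum.swap) (simp add: algebra_simps)
  also have "\<dots> = 0"
    using assms by (intro sum.neutral) (simp add: alternating_binomial_sum_power)
  finally show ?thesis .
qed

lemma alternating_binomial_sum_inverse:
  fixes a :: real
  assumes "a > 0"
  shows "(\<Sum>k\<le>n. real (n choose k) * (-1)^k * (1 / (real k + a))) = fact n / pochhammer a (Suc n)"
  using assms
proof (induction n arbitrary: a)
  case 0
  then show ?case by simp
next
  case (Suc n)
  define P where "P = pochhammer (a + 1) n"
  define b where "b = a + 1 + real n"
  have "P > 0" "b > 0"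
    unfolding P_def b_def using Suc.prems by (auto intro: pochhammer_pos)
  have "(\<Sum>k\<le>Suc n. real (Suc n choose k) * (-1)^k * (1 / (real k + a)))
     = fact n / pochhammer a (Suc n) - fact n / pochhammer (a + 1) (Suc n)"
    using alternating_binomial_sum_Suc[of n "\<lambda>k. 1 / (real k + a)"] Suc.IH[of a] Suc.IH[of "a + 1"] Suc.prems
    by (simp add: algebra_simps)
  also have "\<dots> = fact n / (a * P) - fact n / (P * b)"
    unfolding P_def b_def pochhammer_rec[of a n] pochhammer_Suc[of "a + 1" n] ..
  also have "\<dots> = fact n * (b - a) / (a * (P * b))"
    using \<open>P > 0\<close> \<open>b > 0\<close> Suc.prems by (simp add: field_simps)
  also have "\<dots> = fact (Suc n) / pochhammer a (Suc (Suc n))"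
    unfolding P_def b_def pochhammer_rec[of a "Suc n"] pochhammer_Suc[of "a + 1" n] by (simp add: algebra_simps)
  finally show ?case .
qed

lemma alternating_binomial_sum_poly_divide:
  fixes P :: "real poly" and a :: real
  assumes "a > 0" "degree P \<le> n"
  shows "(\<Sum>k\<le>n. real (n choose k) * (-1)^k * (poly P (real k) / (real k + a)))
       = poly P (-a) * fact n / pochhammer a (Suc n)"
proof (cases "n = 0")
  case True
  with assms obtain c where "P = [:c:]"
    by (metis degree_eq_zeroE le_zero_eq)
  with True show ?thesis by simp
next
  case False
  define H where "H = synthetic_div P (-a)"
  have quotient: "[:a, 1:] * H + [:poly P (-a):] = P"
    using synthetic_div_correct'[of "-a" P] by (simp add: H_def)
  have division: "poly P x = (x + a) * poly H x + poly P (-a)" for x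
    by (subst quotient[symmetric]) (simp add: algebra_simps)
  have "degree H < n"
    using False assms by (simp add: H_def degree_synthetic_div)
  have "poly P (real k) / (real k + a) = poly H (real k) + poly P (-a) * (1 / (real k + a))" for k
    unfolding division[of "real k"] using assms(1) by (simp add: field_simps)
  then have "(\<Sum>k\<le>n. real (n choose k) * (-1)^k * (poly P (real k) / (real k + a)))
      = (\<Sum>k\<le>n. real (n choose k) * (-1)^k * poly H (real k))
        + poly P (-a) * (\<Sum>k\<le>n. real (n choose k) * (-1)^k * (1 / (real k + a)))"
    by (simp add: algebra_simps sum.distrib sum_distrib_left)
  also have "\<dots> = poly P (-a) * fact n / pochhammer a (Suc n)"
    using alternating_binomial_sum_poly[OF \<open>degree H < n\<close>] alternating_binomial_sum_inverse[OF assms(1)]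
    by simp
  finally show ?thesis .
qed

section \<open>Moments of the Alpert polynomials\<close>

definition gbinom_poly :: "nat \<Rightarrow> real \<Rightarrow> real poly" where
  "gbinom_poly n s = smult (1 / fact n) (\<Prod>i<n. [:s + 1 + real i, 1/2:])"

lemma poly_gbinom_poly: "poly (gbinom_poly n s) x = gbinom n (x / 2 + s)"
  by (simp add: gbinom_poly_def gbinom_def poly_prod pochhammer_prod atLeast0LessThan algebra_simps)

lemma degree_gbinom_poly: "degree (gbinom_poly n s) \<le> n"
proof -
  have "degree (\<Prod>i<n. [:s + 1 + real i, 1/2:]) \<le> (\<Sum>i<n. degree [:s + 1 + real i, 1/2:])"
    using degree_prod_sum_le[of "{..<n}" "\<lambda>i. [:s + 1 + real i, 1/2:]"] by (simp add: o_def)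
  also have "\<dots> \<le> (\<Sum>i<n. 1)"
    by (intro sum_mono) (simp add: degree_pCons_le)
  finally show ?thesis
    unfolding gbinom_poly_def using degree_smult_le order_trans by fastforce
qed

definition alpert_poly :: "real \<Rightarrow> nat \<Rightarrow> real \<Rightarrow> real" where
  "alpert_poly s n x = (\<Sum>k=0..n. real (n choose k) * gbinom n (real k / 2 + s) * (-1)^(n - k) * x^k)"

lemma alpert_p_eq_alpert_poly: "alpert_p n = alpert_poly 0 n"
  by (simp add: fun_eq_iff alpert_p_def alpert_poly_def)

lemma alpert_q_eq_alpert_poly: "alpert_q n = alpert_poly (-1/2) n"
  by (simp add: fun_eq_iff alpert_q_def alpert_poly_def diff_divide_distrib)

lemma continuous_on_alpert_poly: "continuous_on A (alpert_poly s n)"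
  unfolding alpert_poly_def by (intro continuous_intros)

lemma has_integral_power_01: "((\<lambda>x::real. x^m) has_integral (1 / (real m + 1))) {0..1}"
proof -
  have "((\<lambda>x::real. x^m) has_integral (1^Suc m / real (Suc m) - 0^Suc m / real (Suc m))) {0..1}"
  proof (rule fundamental_theorem_of_calculus)
    fix x :: real
    show "((\<lambda>x. x^Suc m / real (Suc m)) has_vector_derivative x^m) (at x within {0..1})"
      unfolding has_real_derivative_iff_has_vector_derivative[symmetric]
      by (rule derivative_eq_intros refl | simp del: of_nat_Suc)+
  qed simp
  then show ?thesis by (simp add: add.commute)
qed

lemma neg_one_power_diff: "k \<le> n \<Longrightarrow> (-1::real)^(n - k) = (-1)^n * (-1)^k"
  by (simp add: power_diff field_simps)

lemma alpert_poly_moment: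
  "((\<lambda>x. alpert_poly s n x * x^m) has_integral
     (-1)^n * pochhammer (s + 1 - (real m + 1) / 2) n / pochhammer (real m + 1) (Suc n)) {0..1}"
proof -
  define Q where "Q = gbinom_poly n s"
  have "((\<lambda>x. alpert_poly s n x * x^m) has_integral
      (\<Sum>k=0..n. real (n choose k) * gbinom n (real k / 2 + s) * (-1)^(n - k) * (1 / (real (k + m) + 1)))) {0..1}"
    unfolding alpert_poly_def sum_distrib_right mult.assoc power_add[symmetric]
    by (intro has_integral_sum has_integral_mult_right has_integral_power_01) simp
  also have "(\<Sum>k=0..n. real (n choose k) * gbinom n (real k / 2 + s) * (-1)^(n - k) * (1 / (real (k + m) + 1)))
      = (-1)^n * (\<Sum>k\<le>n. real (n choose k) * (-1)^k * (poly Q (real k) / (real k + (real m + 1))))"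
    unfolding sum_distrib_left atLeast0AtMost Q_def poly_gbinom_poly
    by (intro sum.cong refl) (simp add: neg_one_power_diff algebra_simps)
  also have "\<dots> = (-1)^n * (poly Q (-(real m + 1)) * fact n / pochhammer (real m + 1) (Suc n))"
    unfolding Q_def by (subst alternating_binomial_sum_poly_divide) (auto simp: degree_gbinom_poly)
  also have "poly Q (-(real m + 1)) * fact n = pochhammer (s + 1 - (real m + 1) / 2) n"
  proof -
    have "-(real m + 1) / 2 + s + 1 = s + 1 - (real m + 1) / 2" by (simp add: field_simps)
    then show ?thesis
      by (simp only: Q_def poly_gbinom_poly gbinom_def) simp
  qed
  finally show ?thesis by (simp add: mult.assoc)
qed

lemma pochhammer_of_nat_plus_one: "pochhammer (real m + 1) r = fact (m + r) / fact m"
  using pochhammer_product'[of "1::real" m r] by (simp add: pochhammer_fact[symmetric] add.commute)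

lemma pochhammer_minus_of_nat_add: "pochhammer (- real (l + n)) n = (-1)^n * (fact (l + n) / fact l)"
proof -
  have "pochhammer (- real (l + n)) n = (-1)^n * pochhammer (real (l + n) - real n + 1) n"
    by (rule pochhammer_minus)
  also have "real (l + n) - real n + 1 = real l + 1" by simp
  finally show ?thesis by (simp add: pochhammer_of_nat_plus_one)
qed

lemma pochhammer_half_product:
  "pochhammer ((real m + 1) / 2) l * pochhammer ((real m + 1) / 2 + 1/2) l = fact (m + 2*l) / fact m / 4^l"
proof -
  have "fact (m + 2*l) / fact m = (4::real)^l * (pochhammer ((real m + 1) / 2) l * pochhammer ((real m + 1) / 2 + 1/2) l)"
    using pochhammer_double[of "(real m + 1) / 2" l]
    by (simp only: times_divide_eq_right nonzero_mult_div_cancel_left zero_neq_numeral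
        pochhammer_of_nat_plus_one) (simp add: power_mult mult.assoc)
  then show ?thesis by (simp add: field_simps)
qed

lemma moment_series_term_eq_hyp1F2_term:
  fixes t :: real
  shows "(-1)^(l + n) / fact (2*(l + n) + e) * t^(2*(l + n) + e)
       * ((-1)^n * pochhammer (- real (l + n)) n / pochhammer (real (2*(l + n) + e) + 1) (Suc n))
   = t^(2*n + e) * ((-1)^n * fact n / fact (3*n + e + 1)) *
     (pochhammer (real n + 1) l / (pochhammer ((3 * real n + e + 2) / 2) l * pochhammer ((3 * real n + e + 3) / 2) l * fact l)
      * (-(t^2) / 4)^l)"
proof -
  define N where "N = 3*n + e + 1"
  have denominator: "pochhammer (real (2*(l + n) + e) + 1) (Suc n) = fact (N + 2*l) / fact (2*(l + n) + e)"
    unfolding pochhammer_of_nat_plus_one N_def by (simp add: algebra_simps)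
  have "(3 * real n + e + 2) / 2 = (real N + 1) / 2" "(3 * real n + e + 3) / 2 = (real N + 1) / 2 + 1/2"
    unfolding N_def by (simp_all add: field_simps)
  then have hyp_denominator: "pochhammer ((3 * real n + e + 2) / 2) l * pochhammer ((3 * real n + e + 3) / 2) l
      = fact (N + 2*l) / fact N / 4^l"
    by (simp only: pochhammer_half_product)
  have hyp_numerator: "pochhammer (real n + 1) l = fact (l + n) / fact n"
    using pochhammer_of_nat_plus_one[of n l] by (simp only: add.commute[of n l])
  have hyp_power: "(-(t^2) / 4)^l = (-1)^l * t^(2*l) / 4^l"
  proof -
    have "(-(t^2) / 4)^l = ((-1) * (t^2 / 4))^l" by simp
    also have "\<dots> = (-1)^l * ((t^2)^l / 4^l)" by (simp only: power_mult_distrib power_divide)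
    finally show ?thesis by (simp add: power_mult)
  qed
  have power_split: "t^(2*(l + n) + e) = t^(2*n + e) * t^(2*l)"
    by (simp add: power_add[symmetric] algebra_simps)
  have sign_split: "(-1::real)^(l + n) = (-1)^l * (-1)^n"
    by (simp add: power_add)
  \<comment> \<open>the factorials are abstracted to atoms, otherwise \<open>field_simps\<close> is very slow here\<close>
  have field_identity:
    "sl * sn / A * (T * X) * (sn * (sn * (F / B)) / (C / A)) = T * (sn * E / D) * (F / E / (C / D / q * B) * (sl * X / q))"
    if "A \<noteq> 0" "B \<noteq> 0" "C \<noteq> 0" "D \<noteq> 0" "E \<noteq> 0" "q \<noteq> 0" "sn * sn = 1" for A B C D E F q sl sn T X :: real
    using that by (simp add: field_simps)
  show ?thesis
    unfolding denominator hyp_denominator hyp_numerator pochhammer_minus_of_nat_add N_def[symmetric]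
      hyp_power power_split sign_split
    by (rule field_identity) (simp_all add: power_mult_distrib[symmetric])
qed

section \<open>Termwise integration\<close>

lemma integral_weighted_series:
  fixes u :: "nat \<Rightarrow> real \<Rightarrow> real" and r U :: "real \<Rightarrow> real" and M :: "nat \<Rightarrow> real"
  assumes sums: "\<And>x. x \<in> {a..b} \<Longrightarrow> (\<lambda>j. u j x) sums U x"
    and cont: "\<And>j. continuous_on {a..b} (u j)"
    and bound: "\<And>j x. x \<in> {a..b} \<Longrightarrow> \<bar>u j x\<bar> \<le> M j" and "summable M"
    and r: "continuous_on {a..b} r"
  shows "(\<lambda>j. integral {a..b} (\<lambda>x. r x * u j x)) sums integral {a..b} (\<lambda>x. r x * U x)"
    and "(\<lambda>x. r x * U x) integrable_on {a..b}"
proof -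
  define F where "F k x = (\<Sum>j<k. r x * u j x)" for k x
  have integrable_term: "(\<lambda>x. r x * u j x) integrable_on {a..b}" for j
    by (intro integrable_continuous_interval continuous_on_mult r cont)
  then have integrable_partial_sum: "F k integrable_on {a..b}" for k
    unfolding F_def by (intro integrable_sum) simp
  have integrable_bound: "(\<lambda>x. \<bar>r x\<bar> * suminf M) integrable_on {a..b}"
    by (intro integrable_continuous_interval continuous_intros r)
  have dominated: "norm (F k x) \<le> \<bar>r x\<bar> * suminf M" if x: "x \<in> {a..b}" for k x
  proof -
    have "norm (F k x) \<le> \<bar>r x\<bar> * (\<Sum>j<k. \<bar>u j x\<bar>)"
      by (simp add: F_def sum_distrib_left[symmetric] abs_mult mult_left_mono sum_abs)
    also have "\<dots> \<le> \<bar>r x\<bar> * (\<Sum>j<k. M j)"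
      by (intro mult_left_mono sum_mono bound x) simp
    also have "\<dots> \<le> \<bar>r x\<bar> * suminf M"
      using bound x by (intro mult_left_mono sum_le_suminf \<open>summable M\<close>) (auto intro: order_trans[OF abs_ge_zero])
    finally show ?thesis .
  qed
  have pointwise: "(\<lambda>k. F k x) \<longlonglongrightarrow> r x * U x" if "x \<in> {a..b}" for x
    using sums_mult[OF sums[OF that], of "r x"] unfolding sums_def F_def .
  have "(\<lambda>k. integral {a..b} (F k)) \<longlonglongrightarrow> integral {a..b} (\<lambda>x. r x * U x)"
    and "(\<lambda>x. r x * U x) integrable_on {a..b}"
    using dominated_convergence[OF integrable_partial_sum integrable_bound dominated pointwise] by auto
  moreover have "integral {a..b} (F k) = (\<Sum>j<k. integral {a..b} (\<lambda>x. r x * u j x))" for k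
    unfolding F_def by (intro integral_sum integrable_term) simp
  ultimately show "(\<lambda>j. integral {a..b} (\<lambda>x. r x * u j x)) sums integral {a..b} (\<lambda>x. r x * U x)"
    and "(\<lambda>x. r x * U x) integrable_on {a..b}"
    unfolding sums_def by simp_all
qed

lemma integral_times_power_series:
  fixes r U :: "real \<Rightarrow> real" and c :: "nat \<Rightarrow> real" and m :: "nat \<Rightarrow> nat"
  assumes r: "continuous_on {0..1} r"
    and U: "\<And>x. x \<in> {0..1} \<Longrightarrow> (\<lambda>j. c j * (x * t)^m j) sums U x"
    and summable: "summable (\<lambda>j. \<bar>c j\<bar> * \<bar>t\<bar>^m j)"
  shows "(\<lambda>j. c j * t^m j * integral {0..1} (\<lambda>x. r x * x^m j)) sums integral {0..1} (\<lambda>x. r x * U x)"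
    and "(\<lambda>x. r x * U x) integrable_on {0..1}"
proof -
  have bound: "\<bar>c j * (x * t)^m j\<bar> \<le> \<bar>c j\<bar> * \<bar>t\<bar>^m j" if "x \<in> {0..1}" for j x
  proof -
    have "\<bar>x\<bar>^m j \<le> 1" using that by (intro power_le_one) auto
    then show ?thesis
      by (simp add: abs_mult power_abs power_mult_distrib mult_left_mono mult_left_le_one_le)
  qed
  have "continuous_on {0..1} (\<lambda>x. c j * (x * t)^m j)" for j
    by (intro continuous_intros)
  note series = integral_weighted_series[OF U this bound summable r]
  have "integral {0..1} (\<lambda>x. r x * (c j * (x * t)^m j)) = c j * t^m j * integral {0..1} (\<lambda>x. r x * x^m j)" for j
    by (simp add: power_mult_distrib mult_ac flip: integral_mult_right)
  with series show "(\<lambda>j. c j * t^m j * integral {0..1} (\<lambda>x. r x * x^m j)) sums integral {0..1} (\<lambda>x. r x * U x)"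
    and "(\<lambda>x. r x * U x) integrable_on {0..1}"
    by simp_all
qed

lemma summable_power_div_fact_parity:
  "summable (\<lambda>j. \<bar>t\<bar>^(2*j + e) / fact (2*j + e) :: real)"
proof (rule summable_comparison_test')
  show "summable (\<lambda>j. \<bar>t\<bar>^e * (inverse (fact j) * (t^2)^j))"
    by (intro summable_mult summable_exp)
  fix j :: nat
  have "\<bar>t\<bar>^(2*j + e) = \<bar>t\<bar>^e * (t^2)^j"
    by (simp only: power_add power_mult power2_abs) (rule mult.commute)
  then have "norm (\<bar>t\<bar>^(2*j + e) / fact (2*j + e)) = \<bar>t\<bar>^e * (t^2)^j / fact (2*j + e)"
    by simp
  also have "\<dots> \<le> \<bar>t\<bar>^e * (t^2)^j / fact j"
    by (intro divide_left_mono fact_mono) auto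
  finally show "norm (\<bar>t\<bar>^(2*j + e) / fact (2*j + e)) \<le> \<bar>t\<bar>^e * (inverse (fact j) * (t^2)^j)"
    by (simp add: divide_inverse mult_ac)
qed

text \<open>No summability of \<open>H\<close> is assumed: this spares us proving that the \<open>\<^sub>1F\<^sub>2\<close> series converges.\<close>

lemma sums_mult_imp_eq_mult_suminf:
  fixes C I :: real
  assumes "(\<lambda>l. C * H l) sums I"
  shows "I = C * suminf H"
proof (cases "C = 0")
  case True
  with assms have "(\<lambda>l. 0) sums I" by simp
  then have "I = 0"
    using sums_zero by (rule sums_unique2)
  with True show ?thesis by simp
next
  case False
  with assms have "H sums (I / C)"
    using sums_mult_iff[of C H "I / C"] by simp
  with False show ?thesis by (simp add: sums_unique [symmetric])
qed

lemma alpert_poly_power_series_integral: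
  fixes e n :: nat and U :: "real \<Rightarrow> real"
  assumes U: "\<And>x. x \<in> {0..1} \<Longrightarrow> (\<lambda>j. (-1)^j / fact (2*j + e) * (x * t)^(2*j + e)) sums U x"
  shows "((\<lambda>x. alpert_poly ((real e - 1) / 2) n x * U x) has_integral
     t^(2*n + e) * ((-1)^n * fact n / fact (3*n + e + 1)) *
     hyp1F2 (real n + 1) ((3 * real n + e + 2) / 2) ((3 * real n + e + 3) / 2) (-(t^2) / 4)) {0..1}"
proof -
  define s where "s = (real e - 1) / 2"
  define I where "I = integral {0..1} (\<lambda>x. alpert_poly s n x * U x)"
  define T where "T j = (-1)^j / fact (2*j + e) * t^(2*j + e) * integral {0..1} (\<lambda>x. alpert_poly s n x * x^(2*j + e))"
    for j
  define C where "C = t^(2*n + e) * ((-1)^n * fact n / fact (3*n + e + 1))"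
  define H where "H l = pochhammer (real n + 1) l /
      (pochhammer ((3 * real n + e + 2) / 2) l * pochhammer ((3 * real n + e + 3) / 2) l * fact l) * (-(t^2) / 4)^l"
    for l
  have "summable (\<lambda>j. \<bar>(-1)^j / fact (2*j + e)\<bar> * \<bar>t\<bar>^(2*j + e) :: real)"
    using summable_power_div_fact_parity[of t e] by simp
  note series = integral_times_power_series[OF continuous_on_alpert_poly U this]
  have "T sums I"
    using series(1) unfolding T_def I_def .
  have moment: "integral {0..1} (\<lambda>x. alpert_poly s n x * x^(2*j + e))
      = (-1)^n * pochhammer (- real j) n / pochhammer (real (2*j + e) + 1) (Suc n)" for j
  proof -
    have "s + 1 - (real (2*j + e) + 1) / 2 = - real j"
      unfolding s_def by (simp add: field_simps)
    then show ?thesis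
      using alpert_poly_moment[of s n "2*j + e"] by (simp add: integral_unique)
  qed
  \<comment> \<open>the Pochhammer symbol \<open>(-j)\<^sub>n\<close> kills the first \<open>n\<close> terms\<close>
  have "T j = 0" if "j < n" for j
    using that by (simp add: T_def moment pochhammer_eq_0_iff)
  with \<open>T sums I\<close> have "(\<lambda>l. T (l + n)) sums I"
    by (simp add: sums_zero_iff_shift)
  moreover have "T (l + n) = C * H l" for l
    unfolding T_def C_def H_def moment by (rule moment_series_term_eq_hyp1F2_term)
  ultimately have "I = C * suminf H"
    by (intro sums_mult_imp_eq_mult_suminf) simp
  moreover have "((\<lambda>x. alpert_poly s n x * U x) has_integral I) {0..1}"
    unfolding I_def using series(2) by (rule integrable_integral)
  ultimately show ?thesis
    unfolding s_def C_def H_def hyp1F2_def by simp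
qed

lemma alpert_p_sin_integral:
  "((\<lambda>x. alpert_p n x * sin (x * t)) has_integral
     t^(2*n + 1) * ((-1)^n * fact n / fact (3*n + 2)) *
     hyp1F2 (real n + 1) ((3 * real n + 3) / 2) ((3 * real n + 4) / 2) (-(t^2) / 4)) {0..1}"
  using alpert_poly_power_series_integral[of 1 t "\<lambda>x. sin (x * t)" n] sin_paired
  by (simp add: alpert_p_eq_alpert_poly add.assoc)

lemma alpert_q_cos_integral:
  "((\<lambda>x. alpert_q n x * cos (x * t)) has_integral
     t^(2*n) * ((-1)^n * fact n / fact (3*n + 1)) *
     hyp1F2 (real n + 1) ((3 * real n + 2) / 2) ((3 * real n + 3) / 2) (-(t^2) / 4)) {0..1}"
  using alpert_poly_power_series_integral[of 0 t "\<lambda>x. cos (x * t)" n] cos_paired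
  by (simp add: alpert_q_eq_alpert_poly)

section \<open>The Fourier transform\<close>

lemma has_integral_reflect_split:
  fixes F g h :: "real \<Rightarrow> complex"
  assumes g: "g integrable_on {0..1}" and h: "h integrable_on {0..1}"
    and Fg: "\<And>x. x \<in> {0<..<1} \<Longrightarrow> F x = g x"
    and Fh: "\<And>x. x \<in> {0<..<1} \<Longrightarrow> F (-x) = h x"
  shows "(F has_integral integral {0..1} (\<lambda>x. g x + h x)) {-1..1}"
proof -
  have "(F has_integral integral {0..1} g) {0..1}"
    by (rule has_integral_spike_finite[of "{0,1}" _ _ g]) (auto intro: Fg simp: integrable_integral[OF g])
  moreover have "((\<lambda>x. F (-x)) has_integral integral {0..1} h) {0..1}"
    by (rule has_integral_spike_finite[of "{0,1}" _ _ h]) (auto intro: Fh simp: integrable_integral[OF h])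
  then have "(F has_integral integral {0..1} h) {-1..0}"
    using has_integral_reflect_real[of F "integral {0..1} h" 0 "-1"] by (simp only: minus_zero minus_minus)
  ultimately have "(F has_integral integral {0..1} h + integral {0..1} g) {-1..1}"
    by (intro has_integral_combine[of "-1" 0 1]) auto
  then show ?thesis
    by (simp only: integral_add[OF g h] add.commute)
qed

lemma exp_i_diff_eq_sin:
  "exp (\<i> * complex_of_real y) - exp (\<i> * complex_of_real (- y)) = 2 * \<i> * complex_of_real (sin y)"
  using sin_exp_eq[of "complex_of_real y"] by (simp add: sin_of_real field_simps)

lemma exp_i_add_eq_cos:
  "exp (\<i> * complex_of_real y) + exp (\<i> * complex_of_real (- y)) = 2 * complex_of_real (cos y)"
  using cos_exp_eq[of "complex_of_real y"] by (simp add: cos_of_real field_simps)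

lemma fourier_integral_odd:
  fixes F g :: "real \<Rightarrow> real"
  assumes "\<And>x. x \<in> {0<..<1} \<Longrightarrow> F x = g x" "\<And>x. x \<in> {0<..<1} \<Longrightarrow> F (-x) = - g x"
    and "continuous_on {0..1} g" and "((\<lambda>x. g x * sin (x * t)) has_integral I) {0..1}"
  shows "integral {-1..1} (\<lambda>x. complex_of_real (F x) * exp (\<i> * complex_of_real (x * t)))
       = 2 * \<i> * complex_of_real I"
proof -
  have split: "((\<lambda>x. complex_of_real (F x) * exp (\<i> * complex_of_real (x * t))) has_integral
      integral {0..1} (\<lambda>x. complex_of_real (g x) * exp (\<i> * complex_of_real (x * t))
        + complex_of_real (- g x) * exp (\<i> * complex_of_real (- x * t)))) {-1..1}"
    using assms(1,2,3) by (intro has_integral_reflect_split integrable_continuous_real continuous_intros) auto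
  have pointwise: "complex_of_real (g x) * exp (\<i> * complex_of_real (x * t))
      + complex_of_real (- g x) * exp (\<i> * complex_of_real (- x * t))
      = 2 * \<i> * complex_of_real (g x * sin (x * t))" for x
  proof -
    have "complex_of_real (g x) * exp (\<i> * complex_of_real (x * t))
        + complex_of_real (- g x) * exp (\<i> * complex_of_real (- x * t))
        = complex_of_real (g x) * (exp (\<i> * complex_of_real (x * t)) - exp (\<i> * complex_of_real (- (x * t))))"
      by (simp add: algebra_simps)
    also have "\<dots> = 2 * \<i> * complex_of_real (g x * sin (x * t))"
      by (simp only: exp_i_diff_eq_sin) (simp add: mult_ac)
    finally show ?thesis .
  qed
  have "((\<lambda>x. 2 * \<i> * complex_of_real (g x * sin (x * t))) has_integral 2 * \<i> * complex_of_real I) {0..1}"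
    using assms(4) by (intro has_integral_mult_right has_integral_of_real)
  then have "integral {0..1} (\<lambda>x. complex_of_real (g x) * exp (\<i> * complex_of_real (x * t))
        + complex_of_real (- g x) * exp (\<i> * complex_of_real (- x * t))) = 2 * \<i> * complex_of_real I"
    unfolding pointwise by (rule integral_unique)
  then show ?thesis
    by (rule trans[OF integral_unique[OF split]])
qed

lemma fourier_integral_even:
  fixes F g :: "real \<Rightarrow> real"
  assumes "\<And>x. x \<in> {0<..<1} \<Longrightarrow> F x = g x" "\<And>x. x \<in> {0<..<1} \<Longrightarrow> F (-x) = g x"
    and "continuous_on {0..1} g" and "((\<lambda>x. g x * cos (x * t)) has_integral I) {0..1}"
  shows "integral {-1..1} (\<lambda>x. complex_of_real (F x) * exp (\<i> * complex_of_real (x * t)))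
       = 2 * complex_of_real I"
proof -
  have split: "((\<lambda>x. complex_of_real (F x) * exp (\<i> * complex_of_real (x * t))) has_integral
      integral {0..1} (\<lambda>x. complex_of_real (g x) * exp (\<i> * complex_of_real (x * t))
        + complex_of_real (g x) * exp (\<i> * complex_of_real (- x * t)))) {-1..1}"
    using assms(1,2,3) by (intro has_integral_reflect_split integrable_continuous_real continuous_intros) auto
  have pointwise: "complex_of_real (g x) * exp (\<i> * complex_of_real (x * t))
      + complex_of_real (g x) * exp (\<i> * complex_of_real (- x * t))
      = 2 * complex_of_real (g x * cos (x * t))" for x
  proof -
    have "complex_of_real (g x) * exp (\<i> * complex_of_real (x * t))
        + complex_of_real (g x) * exp (\<i> * complex_of_real (- x * t))
        = complex_of_real (g x) * (exp (\<i> * complex_of_real (x * t)) + exp (\<i> * complex_of_real (- (x * t))))"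
      by (simp only: mult_minus_left distrib_left)
    also have "\<dots> = 2 * complex_of_real (g x * cos (x * t))"
      by (simp only: exp_i_add_eq_cos) (simp add: mult_ac)
    finally show ?thesis .
  qed
  have "((\<lambda>x. 2 * complex_of_real (g x * cos (x * t))) has_integral 2 * complex_of_real I) {0..1}"
    using assms(4) by (intro has_integral_mult_right has_integral_of_real)
  then have "integral {0..1} (\<lambda>x. complex_of_real (g x) * exp (\<i> * complex_of_real (x * t))
        + complex_of_real (g x) * exp (\<i> * complex_of_real (- x * t))) = 2 * complex_of_real I"
    unfolding pointwise by (rule integral_unique)
  then show ?thesis
    by (rule trans[OF integral_unique[OF split]])
qed

lemma alpert_multiwavelets_reflect:
  assumes "alpert_multiwavelets N f" "k \<in> {1..N}" "x \<in> {0<..<1}"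
  shows "f k (-x) = (-1)^(k + N - 1) * f k x"
  using assms unfolding alpert_multiwavelets_def by blast

lemma alpert_multiwavelet_fourier_p:
  assumes alp: "alpert_multiwavelets (n + 1) f"
    and hc: "\<forall>x\<in>{0<..<1}. f (n + 1) x = c * alpert_p n x"
  shows "integral {-1..1} (\<lambda>x. complex_of_real (f (n + 1) x) * exp (\<i> * complex_of_real (x * t)))
      = 2 * \<i> * complex_of_real (c * t ^ (2 * n + 1) * ((-1) ^ n * fact n / fact (3 * n + 2))
          * hyp1F2 (real n + 1) ((3 * real n + 3) / 2) ((3 * real n + 4) / 2) (- (t ^ 2) / 4))"
proof -
  have reflect: "f (n + 1) (-x) = - (c * alpert_p n x)" if "x \<in> {0<..<1}" for x
    using alpert_multiwavelets_reflect[OF alp, of "n + 1" x] hc that by simp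
  have continuous: "continuous_on {0..1} (\<lambda>x. c * alpert_p n x)"
    by (intro continuous_on_mult_left) (simp add: alpert_p_eq_alpert_poly continuous_on_alpert_poly)
  have integral: "((\<lambda>x. c * alpert_p n x * sin (x * t)) has_integral
      c * (t ^ (2 * n + 1) * ((-1) ^ n * fact n / fact (3 * n + 2))
        * hyp1F2 (real n + 1) ((3 * real n + 3) / 2) ((3 * real n + 4) / 2) (- (t ^ 2) / 4))) {0..1}"
    using has_integral_mult_right[OF alpert_p_sin_integral, of c n t] by (simp only: mult.assoc)
  show ?thesis
    using fourier_integral_odd[OF _ reflect continuous integral] hc by (simp only: mult.assoc)
qed

lemma alpert_multiwavelet_fourier_q:
  assumes alp: "alpert_multiwavelets (n + 1) f" and "n \<ge> 1"
    and hd: "\<forall>x\<in>{0<..<1}. f n x = d * alpert_q n x"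
  shows "integral {-1..1} (\<lambda>x. complex_of_real (f n x) * exp (\<i> * complex_of_real (x * t)))
      = complex_of_real (2 * d * t ^ (2 * n) * ((-1) ^ n * fact n / fact (3 * n + 1))
          * hyp1F2 (real n + 1) ((3 * real n + 2) / 2) ((3 * real n + 3) / 2) (- (t ^ 2) / 4))"
proof -
  have reflect: "f n (-x) = d * alpert_q n x" if "x \<in> {0<..<1}" for x
    using alpert_multiwavelets_reflect[OF alp, of n x] \<open>n \<ge> 1\<close> hd that by (simp add: power_mult)
  have continuous: "continuous_on {0..1} (\<lambda>x. d * alpert_q n x)"
    by (intro continuous_on_mult_left) (simp add: alpert_q_eq_alpert_poly continuous_on_alpert_poly)
  have integral: "((\<lambda>x. d * alpert_q n x * cos (x * t)) has_integral
      d * (t ^ (2 * n) * ((-1) ^ n * fact n / fact (3 * n + 1))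
        * hyp1F2 (real n + 1) ((3 * real n + 2) / 2) ((3 * real n + 3) / 2) (- (t ^ 2) / 4))) {0..1}"
    using has_integral_mult_right[OF alpert_q_cos_integral, of d n t] by (simp only: mult.assoc)
  show ?thesis
    using fourier_integral_even[OF _ reflect continuous integral] hd
    by (simp only: mult.assoc of_real_mult of_real_numeral)
qed

theorem mainTheorem12:
  fixes n :: nat and f :: "nat \<Rightarrow> real \<Rightarrow> real" and c :: real
  assumes alp: "alpert_multiwavelets (n + 1) f"
    and hc: "\<forall>x\<in>{0<..<1}. f (n + 1) x = c * alpert_p n x"
  shows "(\<forall>t::real. integral {-1..1} (\<lambda>x. complex_of_real (f (n + 1) x) * exp (\<i> * complex_of_real (x * t)))
            = 2 * \<i> * complex_of_real (c * t ^ (2 * n + 1) * ((-1) ^ n * fact n / fact (3 * n + 2))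
                * hyp1F2 (real n + 1) ((3 * real n + 3) / 2) ((3 * real n + 4) / 2) (- (t ^ 2) / 4)))
       \<and> (\<forall>d::real. n \<ge> 1 \<longrightarrow> (\<forall>x\<in>{0<..<1}. f n x = d * alpert_q n x) \<longrightarrow>
           (\<forall>t::real. integral {-1..1} (\<lambda>x. complex_of_real (f n x) * exp (\<i> * complex_of_real (x * t)))
            = complex_of_real (2 * d * t ^ (2 * n) * ((-1) ^ n * fact n / fact (3 * n + 1))
                * hyp1F2 (real n + 1) ((3 * real n + 2) / 2) ((3 * real n + 3) / 2) (- (t ^ 2) / 4))))"
  using alpert_multiwavelet_fourier_p[OF alp hc] alpert_multiwavelet_fourier_q[OF alp] by blast

end
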